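(* Let $S\in\Delta^1_n$. Then $$\phi_S(z)=z^n+\sum_{j=1}^{\lfloor n/2\rfloor}(-1)^j c_{2j}(S)\,z^{n-2j},$$ where $c_{2j}(S)=|\pounds_{2j}|$ is the number of linear subsidigraphs of $S$ of order $2j$.
   Context: A sidigraph is a digraph (no loops, at most one arc from $u$ to $v$) with a sign $\sigma(a)\in\{-1,1\}$ on each arc $a$. Its adjacency matrix $A(S)=(a_{ij})$ has $a_{ij}=\sigma(v_i,v_j)$ if there is an arc from $v_i$ to $v_j$ and $0$ otherwise; $\phi_S(z)=\det(zI-A(S))$. The sign of a directed cycle is the product of the signs of its arcs; the cycle is positive or negative accordingly. A sidigraph is bipartite if its underlying digraph is bipartite. $\Delta^1_n$ is the class of bipartite sidigraphs on $n$ vertices in which every directed cycle of length $\equiv 0\pmod 4$ is negative and every directed cycle of length $\equiv 2\pmod 4$ is positive. A linear subsidigraph of order $k$ is a subsidigraph on $k$ vertices in which every vertex has indegree and outdegree $1$ (a vertex-disjoint union of directed cycles covering those $k$ vertices); $\pounds_k$ is the set of these. *)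

theory Defs
  imports "Jordan_Normal_Form.Char_Poly"
begin

text \<open>A sidigraph on vertex set {0..<n}: arc relation (no loops, at most one arc
  from u to v automatically since arc is a predicate) and a sign sigma on arcs.\<close>

definition sidigraph :: "nat \<Rightarrow> (nat \<Rightarrow> nat \<Rightarrow> bool) \<Rightarrow> (nat \<Rightarrow> nat \<Rightarrow> int) \<Rightarrow> bool" where
  "sidigraph n arc sigma \<longleftrightarrow>
     (\<forall>u v. arc u v \<longrightarrow> u < n \<and> v < n) \<and>
     (\<forall>u. \<not> arc u u) \<and>
     (\<forall>u v. arc u v \<longrightarrow> sigma u v \<in> {-1, 1})"

definition adj_mat :: "nat \<Rightarrow> (nat \<Rightarrow> nat \<Rightarrow> bool) \<Rightarrow> (nat \<Rightarrow> nat \<Rightarrow> int) \<Rightarrow> int mat" where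
  "adj_mat n arc sigma = mat n n (\<lambda>(i, j). if arc i j then sigma i j else 0)"

definition dir_cycle :: "nat \<Rightarrow> (nat \<Rightarrow> nat \<Rightarrow> bool) \<Rightarrow> nat list \<Rightarrow> bool" where
  "dir_cycle n arc cs \<longleftrightarrow> distinct cs \<and> length cs \<ge> 2 \<and> set cs \<subseteq> {0..<n} \<and>
     (\<forall>i < length cs. arc (cs ! i) (cs ! ((i + 1) mod length cs)))"

definition cycle_sign :: "(nat \<Rightarrow> nat \<Rightarrow> int) \<Rightarrow> nat list \<Rightarrow> int" where
  "cycle_sign sigma cs = (\<Prod>i < length cs. sigma (cs ! i) (cs ! ((i + 1) mod length cs)))"

definition bipartite_sd :: "nat \<Rightarrow> (nat \<Rightarrow> nat \<Rightarrow> bool) \<Rightarrow> bool" where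
  "bipartite_sd n arc \<longleftrightarrow> (\<exists>X. \<forall>u < n. \<forall>v < n. arc u v \<longrightarrow> (u \<in> X \<longleftrightarrow> v \<notin> X))"

definition Delta1 :: "nat \<Rightarrow> (nat \<Rightarrow> nat \<Rightarrow> bool) \<Rightarrow> (nat \<Rightarrow> nat \<Rightarrow> int) \<Rightarrow> bool" where
  "Delta1 n arc sigma \<longleftrightarrow> sidigraph n arc sigma \<and> bipartite_sd n arc \<and>
     (\<forall>cs. dir_cycle n arc cs \<longrightarrow>
        (length cs mod 4 = 0 \<longrightarrow> cycle_sign sigma cs = -1) \<and>
        (length cs mod 4 = 2 \<longrightarrow> cycle_sign sigma cs = 1))"

text \<open>A linear subsidigraph is determined by its arc set L (signs are inherited);
  its vertex set is the set of endpoints, and each of these has in- and outdegree 1 in L.\<close>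
definition sd_verts :: "(nat \<times> nat) set \<Rightarrow> nat set" where
  "sd_verts L = fst ` L \<union> snd ` L"

definition linear_subsidigraph :: "nat \<Rightarrow> (nat \<Rightarrow> nat \<Rightarrow> bool) \<Rightarrow> (nat \<times> nat) set \<Rightarrow> bool" where
  "linear_subsidigraph n arc L \<longleftrightarrow>
     L \<subseteq> {(u, v). u < n \<and> v < n \<and> arc u v} \<and>
     (\<forall>v \<in> sd_verts L. card {w. (v, w) \<in> L} = 1 \<and> card {u. (u, v) \<in> L} = 1)"

definition lin_count :: "nat \<Rightarrow> (nat \<Rightarrow> nat \<Rightarrow> bool) \<Rightarrow> nat \<Rightarrow> nat" where
  "lin_count n arc k = card {L. linear_subsidigraph n arc L \<and> card (sd_verts L) = k}"

end

theory Submission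
  imports Defs "HOL-Combinatorics.Cycles"
begin

text \<open>Expand \<open>det (z I - A)\<close> over permutations. A permutation \<open>p\<close> contributes only if every
  moved point \<open>i\<close> is sent along an arc \<open>i \<rightarrow> p i\<close>; the arcs \<open>(i, p i)\<close> then form a linear
  subsidigraph on the moved points, and every linear subsidigraph arises from exactly one such
  \<open>p\<close>. If \<open>p\<close> moves \<open>k\<close> points, it contributes \<open>z^(n - k)\<close> times \<open>sign p\<close> times the product
  of the \<open>-\<sigma>\<close> over its arcs. Splitting \<open>p\<close> into disjoint cycles, a cycle of length \<open>l\<close> has sign
  \<open>(-1)^(l - 1)\<close> and its arcs give \<open>(-1)^l\<close> times its cycle sign, so it contributes minus its
  cycle sign. Bipartiteness makes \<open>l\<close> even, and the sign condition of \<open>\<Delta>\<^sup>1\<close> says precisely that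
  minus the cycle sign is \<open>(-1)^(l div 2)\<close>; hence \<open>p\<close> contributes \<open>(-1)^(k div 2) z^(n - k)\<close>.\<close>

lemma sign_cycle_of_list:
  "distinct cs \<Longrightarrow> sign (cycle_of_list cs) = (-1) ^ (length cs - 1)"
proof (induction cs rule: cycle_of_list.induct)
  case (1 i j cs)
  have "sign (cycle_of_list (i # j # cs)) = sign (transpose i j) * sign (cycle_of_list (j # cs))"
    by (simp add: sign_compose permutation_swap_id permutation_of_cycle)
  also have "\<dots> = (-1) ^ (length (i # j # cs) - 1)"
    using 1 by (simp add: sign_swap_id)
  finally show ?case .
qed auto

lemma cycle_decomp_permutes: "cycle_decomp I p \<Longrightarrow> p permutes I"
proof (induction rule: cycle_decomp.induct)
  case (comp I p cs)
  have "cycle_of_list cs permutes (set cs \<union> I)"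
    by (rule permutes_subset[OF cycle_permutes]) auto
  moreover have "p permutes (set cs \<union> I)" by (rule permutes_subset[OF comp.IH]) auto
  ultimately show ?case by (rule permutes_compose[rotated])
qed (auto simp: permutes_def)

lemma cycle_of_list_nth:
  assumes "distinct cs" and "k < length cs"
  shows "cycle_of_list cs (cs ! k) = cs ! ((k + 1) mod length cs)"
proof -
  have rot: "map (cycle_of_list cs) cs = rotate1 cs"
    using cyclic_rotation[OF assms(1), of 1] by simp
  have "cycle_of_list cs (cs ! k) = map (cycle_of_list cs) cs ! k" using assms(2) by simp
  also have "\<dots> = cs ! ((k + 1) mod length cs)"
    unfolding rot using assms(2) by (simp add: nth_rotate1)
  finally show ?thesis .
qed

lemma cycle_of_list_moves:
  assumes "distinct cs" and "length cs \<ge> 2" and "x \<in> set cs"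
  shows "cycle_of_list cs x \<noteq> x"
proof -
  obtain k where k: "k < length cs" "x = cs ! k" using assms(3) by (metis in_set_conv_nth)
  have "(k + 1) mod length cs \<noteq> k"
  proof (cases "k + 1 < length cs")
    case False
    then have "k + 1 = length cs" using k(1) by simp
    with assms(2) show ?thesis by simp
  qed simp
  moreover have "(k + 1) mod length cs < length cs"
    using k(1) by (intro mod_less_divisor) linarith
  ultimately have "cs ! ((k + 1) mod length cs) \<noteq> cs ! k"
    using k(1) by (simp add: nth_eq_iff_index_eq[OF assms(1)])
  then show ?thesis using k(2) cycle_of_list_nth[OF assms(1) k(1)] by simp
qed

lemma cycle_of_list_comp_disjoint:
  assumes "q permutes I" and "set cs \<inter> I = {}"
  shows "(cycle_of_list cs \<circ> q) x = (if x \<in> set cs then cycle_of_list cs x else q x)"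
proof (cases "x \<in> I")
  case True
  then have "q x \<notin> set cs" using assms by (auto simp: permutes_in_image)
  with True assms(2) show ?thesis by (auto simp: id_outside_supp)
next
  case False
  then have "q x = x" using assms(1) by (simp add: permutes_not_in)
  then show ?thesis by (simp add: id_outside_supp)
qed

lemma prod_cycle_of_list:
  assumes "distinct cs"
  shows "(\<Prod>x\<in>set cs. f x (cycle_of_list cs x)) =
         (\<Prod>k<length cs. f (cs ! k) (cs ! ((k + 1) mod length cs)))"
proof -
  have "set cs = (!) cs ` {..<length cs}" by (auto simp: set_conv_nth)
  moreover have "inj_on ((!) cs) {..<length cs}" using assms by (simp add: inj_on_nth)
  ultimately show ?thesis by (simp add: prod.reindex cycle_of_list_nth[OF assms])
qed

definition follows_arcs :: "('a \<Rightarrow> 'a \<Rightarrow> bool) \<Rightarrow> ('a \<Rightarrow> 'a) \<Rightarrow> bool" where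
  "follows_arcs arc p \<longleftrightarrow> (\<forall>i. p i \<noteq> i \<longrightarrow> arc i (p i))"

definition perm_weight :: "('a \<Rightarrow> 'a \<Rightarrow> int) \<Rightarrow> ('a \<Rightarrow> 'a) \<Rightarrow> int" where
  "perm_weight sigma p = sign p * (\<Prod>i\<in>{i. p i \<noteq> i}. - sigma i (p i))"

lemma moved_cycle_comp:
  assumes "q permutes I" and "set cs \<inter> I = {}" and "distinct cs" and "length cs \<ge> 2"
  shows "{i. (cycle_of_list cs \<circ> q) i \<noteq> i} = set cs \<union> {i. q i \<noteq> i}"
  unfolding cycle_of_list_comp_disjoint[OF assms(1,2)]
  using cycle_of_list_moves[OF assms(3,4)] by auto

lemma card_moved_cycle_comp:
  assumes q: "q permutes I" and "finite I" and disj: "set cs \<inter> I = {}"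
    and cs: "distinct cs" "length cs \<ge> 2"
  shows "card {i. (cycle_of_list cs \<circ> q) i \<noteq> i} = length cs + card {i. q i \<noteq> i}"
proof -
  have "{i. q i \<noteq> i} \<subseteq> I" using q by (simp add: permutes_altdef)
  then have "finite {i. q i \<noteq> i}" and "set cs \<inter> {i. q i \<noteq> i} = {}"
    using \<open>finite I\<close> disj finite_subset by blast+
  then show ?thesis
    unfolding moved_cycle_comp[OF q disj cs] by (simp add: card_Un_disjoint distinct_card[OF cs(1)])
qed

lemma follows_arcs_cycle_comp:
  assumes q: "q permutes I" and disj: "set cs \<inter> I = {}" and cs: "distinct cs" "length cs \<ge> 2"
    and follows: "follows_arcs arc (cycle_of_list cs \<circ> q)"
  shows "follows_arcs arc q" and "\<And>x. x \<in> set cs \<Longrightarrow> arc x (cycle_of_list cs x)"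
proof -
  have arcs: "arc i (if i \<in> set cs then cycle_of_list cs i else q i)"
    if "i \<in> set cs \<union> {i. q i \<noteq> i}" for i
  proof -
    have "(cycle_of_list cs \<circ> q) i \<noteq> i" using that moved_cycle_comp[OF q disj cs] by blast
    then have "arc i ((cycle_of_list cs \<circ> q) i)" using follows unfolding follows_arcs_def by blast
    then show ?thesis unfolding cycle_of_list_comp_disjoint[OF q disj] .
  qed
  have "i \<notin> set cs" if "q i \<noteq> i" for i using q disj that by (auto dest: permutes_not_in)
  then show "follows_arcs arc q" unfolding follows_arcs_def using arcs by fastforce
  show "arc x (cycle_of_list cs x)" if "x \<in> set cs" for x using arcs[of x] that by simp
qed

lemma perm_weight_cycle_comp:
  assumes q: "q permutes I" and "finite I" and disj: "set cs \<inter> I = {}"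
    and cs: "distinct cs" "length cs \<ge> 2"
  shows "perm_weight sigma (cycle_of_list cs \<circ> q) = - cycle_sign sigma cs * perm_weight sigma q"
proof -
  let ?c = "cycle_of_list cs" and ?l = "length cs"
  have moved_q: "{i. q i \<noteq> i} \<subseteq> I" using q by (auto simp: permutes_def)
  then have fin: "finite {i. q i \<noteq> i}" using \<open>finite I\<close> by (rule finite_subset)
  have disj': "set cs \<inter> {i. q i \<noteq> i} = {}" using disj moved_q by blast
  have "permutation q" using q \<open>finite I\<close> permutation_permutes by blast
  then have sign_eq: "sign (?c \<circ> q) = (-1) ^ (?l - 1) * sign q"
    by (simp add: sign_compose permutation_of_cycle sign_cycle_of_list[OF cs(1)])
  have "(\<Prod>i\<in>{i. (?c \<circ> q) i \<noteq> i}. - sigma i ((?c \<circ> q) i)) =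
      (\<Prod>i\<in>set cs \<union> {i. q i \<noteq> i}. - sigma i (if i \<in> set cs then ?c i else q i))"
    by (simp only: moved_cycle_comp[OF q disj cs]) (simp only: cycle_of_list_comp_disjoint[OF q disj])
  also have "\<dots> = (\<Prod>i\<in>set cs. - sigma i (?c i)) * (\<Prod>i\<in>{i. q i \<noteq> i}. - sigma i (q i))"
    unfolding prod.union_disjoint[OF finite_set fin disj']
    using disj' by (auto intro!: arg_cong2[where f = "(*)"] prod.cong)
  also have "(\<Prod>i\<in>set cs. - sigma i (?c i)) = (-1) ^ ?l * cycle_sign sigma cs"
    unfolding prod_uminus prod_cycle_of_list[OF cs(1), where f = sigma] cycle_sign_def
    by (simp add: distinct_card[OF cs(1)])
  finally have prod_eq: "(\<Prod>i\<in>{i. (?c \<circ> q) i \<noteq> i}. - sigma i ((?c \<circ> q) i)) =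
      (-1) ^ ?l * cycle_sign sigma cs * (\<Prod>i\<in>{i. q i \<noteq> i}. - sigma i (q i))" .
  obtain m where m: "?l = Suc m" using cs(2) by (cases ?l) auto
  have "(-1::int) ^ (?l - 1) * (-1) ^ ?l = -1"
    unfolding m by (simp add: power_mult_distrib[symmetric])
  moreover have "perm_weight sigma (?c \<circ> q) =
      ((-1) ^ (?l - 1) * (-1) ^ ?l) * (cycle_sign sigma cs * perm_weight sigma q)"
    unfolding perm_weight_def sign_eq prod_eq by (simp only: mult_ac)
  ultimately show ?thesis by simp
qed

lemma dir_cycle_of_cycle_of_list:
  assumes "distinct cs" and "length cs \<ge> 2" and "set cs \<subseteq> {0..<n}"
    and arcs: "\<And>x. x \<in> set cs \<Longrightarrow> arc x (cycle_of_list cs x)"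
  shows "dir_cycle n arc cs"
  unfolding dir_cycle_def
  using assms arcs[OF nth_mem] by (simp add: cycle_of_list_nth)

lemma bipartite_dir_cycle_even:
  assumes "bipartite_sd n arc" and C: "dir_cycle n arc cs"
  shows "even (length cs)"
proof -
  obtain X where X: "\<And>u v. u < n \<Longrightarrow> v < n \<Longrightarrow> arc u v \<Longrightarrow> u \<in> X \<longleftrightarrow> v \<notin> X"
    using assms(1) unfolding bipartite_sd_def by blast
  let ?l = "length cs"
  from C have l2: "?l \<ge> 2" and lt: "\<And>i. i < ?l \<Longrightarrow> cs ! i < n"
    and arcs: "\<And>i. i < ?l \<Longrightarrow> arc (cs ! i) (cs ! ((i + 1) mod ?l))"
    unfolding dir_cycle_def by (auto simp: subset_eq)
  have colour: "(cs ! i \<in> X \<longleftrightarrow> cs ! 0 \<in> X) \<longleftrightarrow> even i" if "i < ?l" for i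
    using that
  proof (induction i)
    case (Suc i)
    then have "arc (cs ! i) (cs ! Suc i)" using arcs[of i] by simp
    then have "cs ! i \<in> X \<longleftrightarrow> cs ! Suc i \<notin> X" using X lt Suc.prems by simp
    then show ?case using Suc by auto
  qed simp
  have last: "?l - 1 < ?l" and "Suc (?l - 1) = ?l" using l2 by simp_all
  then have "arc (cs ! (?l - 1)) (cs ! 0)" using arcs[OF last] by simp
  moreover have "cs ! 0 < n" using lt l2 by (metis less_le_trans zero_less_numeral)
  ultimately have "cs ! (?l - 1) \<in> X \<longleftrightarrow> cs ! 0 \<notin> X" using X lt[OF last] by blast
  then have "odd (?l - 1)" using colour[OF last] by blast
  then show ?thesis using l2 by simp
qed

lemma Delta1_cycle_sign:
  assumes D: "Delta1 n arc sigma" and C: "dir_cycle n arc cs"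
  shows "even (length cs)" and "- cycle_sign sigma cs = (-1) ^ (length cs div 2)"
proof -
  show ev: "even (length cs)"
    using D C bipartite_dir_cycle_even unfolding Delta1_def by blast
  have sign4: "length cs mod 4 = 0 \<Longrightarrow> cycle_sign sigma cs = -1"
    "length cs mod 4 = 2 \<Longrightarrow> cycle_sign sigma cs = 1"
    using D C unfolding Delta1_def by auto
  from ev obtain a where a: "length cs = 2 * a" by blast
  show "- cycle_sign sigma cs = (-1) ^ (length cs div 2)"
  proof (cases "even a")
    case True
    then have "length cs mod 4 = 0" using a by presburger
    then show ?thesis using sign4 a True by simp
  next
    case False
    then have "length cs mod 4 = 2" using a by presburger
    then show ?thesis using sign4 a False by simp
  qed
qed

lemma Delta1_perm_weight_cycle_decomp:
  assumes D: "Delta1 n arc sigma"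
  shows "cycle_decomp I p \<Longrightarrow> I \<subseteq> {0..<n} \<Longrightarrow> follows_arcs arc p \<Longrightarrow>
    even (card {i. p i \<noteq> i}) \<and> perm_weight sigma p = (-1) ^ (card {i. p i \<noteq> i} div 2)"
proof (induction rule: cycle_decomp.induct)
  case empty
  then show ?case by (simp add: perm_weight_def)
next
  case (comp I q cs)
  have q: "q permutes I" using comp.hyps(1) by (rule cycle_decomp_permutes)
  have "finite I" using comp.prems(1) finite_subset by blast
  show ?case
  proof (cases "length cs \<ge> 2")
    case False
    then have "cycle_of_list cs = id" by (cases cs rule: cycle_of_list.cases) auto
    then show ?thesis using comp by simp
  next
    case True
    let ?c = "cycle_of_list cs" and ?m = "card {i. q i \<noteq> i}"
    note arcs = follows_arcs_cycle_comp[OF q comp.hyps(3,2) True comp.prems(2)]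
    have IH: "even ?m" "perm_weight sigma q = (-1) ^ (?m div 2)"
      using comp.IH comp.prems(1) arcs(1) by auto
    have "dir_cycle n arc cs"
      using comp.prems(1) arcs(2) by (intro dir_cycle_of_cycle_of_list[OF comp.hyps(2) True]) auto
    note cyc = Delta1_cycle_sign[OF D this]
    note card = card_moved_cycle_comp[OF q \<open>finite I\<close> comp.hyps(3,2) True]
    have "perm_weight sigma (?c \<circ> q) = (-1) ^ (length cs div 2) * (-1) ^ (?m div 2)"
      unfolding perm_weight_cycle_comp[OF q \<open>finite I\<close> comp.hyps(3,2) True] cyc(2) IH(2) ..
    also have "\<dots> = (-1) ^ (card {i. (?c \<circ> q) i \<noteq> i} div 2)"
      unfolding card using cyc(1) IH(1) by (simp add: power_add[symmetric])
    finally have weight: "perm_weight sigma (?c \<circ> q) = (-1) ^ (card {i. (?c \<circ> q) i \<noteq> i} div 2)" .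
    have "even (length cs + ?m)" using cyc(1) IH(1) by simp
    with weight show ?thesis unfolding card by blast
  qed
qed

lemma Delta1_perm_weight:
  assumes "Delta1 n arc sigma" and "p permutes {0..<n}" and "follows_arcs arc p"
  shows "even (card {i. p i \<noteq> i})" and "perm_weight sigma p = (-1) ^ (card {i. p i \<noteq> i} div 2)"
  using Delta1_perm_weight_cycle_decomp[OF assms(1) cycle_decomposition[OF assms(2)]] assms(3)
  by auto

lemma prod_monom: "finite A \<Longrightarrow> (\<Prod>i\<in>A. monom (c i) (d i)) = monom (\<Prod>i\<in>A. c i) (\<Sum>i\<in>A. d i)"
  by (induction A rule: finite_induct) (auto simp: mult_monom)

lemma char_poly_matrix_adj_mat:
  assumes "sidigraph n arc sigma" and "i < n" and "j < n"
  shows "char_poly_matrix (adj_mat n arc sigma) $$ (i, j) =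
    (if i = j then monom 1 1 else monom (- (if arc i j then sigma i j else 0)) 0)"
  using assms by (auto simp: sidigraph_def char_poly_matrix_def adj_mat_def monom_0 monom_Suc)

lemma leibniz_term_adj_mat:
  assumes S: "sidigraph n arc sigma" and p: "p permutes {0..<n}"
  shows "signof p * (\<Prod>i = 0..<n. char_poly_matrix (adj_mat n arc sigma) $$ (i, p i)) =
    (if follows_arcs arc p then monom (perm_weight sigma p) (n - card {i. p i \<noteq> i}) else 0)"
proof -
  define c where "c i = (if p i = i then 1 else - (if arc i (p i) then sigma i (p i) else 0))" for i
  define M where "M = {i. p i \<noteq> i}"
  have M: "M \<subseteq> {0..<n}" using p unfolding M_def by (auto simp: permutes_def)
  have "(\<Prod>i = 0..<n. char_poly_matrix (adj_mat n arc sigma) $$ (i, p i)) =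
      (\<Prod>i = 0..<n. monom (c i) (if p i = i then 1 else 0))"
    using p by (intro prod.cong) (auto simp: char_poly_matrix_adj_mat[OF S] permutes_in_image c_def)
  also have "\<dots> = monom (\<Prod>i\<in>M. c i) (n - card M)"
  proof -
    have "(\<Prod>i = 0..<n. c i) = (\<Prod>i\<in>M. c i)"
      by (rule prod.mono_neutral_right[OF _ M]) (auto simp: c_def M_def)
    moreover have "(\<Sum>i = 0..<n. if p i = i then 1 else 0) = card ({0..<n} - M)"
      by (simp add: sum.If_cases M_def set_diff_eq Int_def)
    moreover have "card ({0..<n} - M) = n - card M"
      using M by (simp add: card_Diff_subset finite_subset)
    ultimately show ?thesis by (simp add: prod_monom)
  qed
  finally have leibniz: "signof p * (\<Prod>i = 0..<n. char_poly_matrix (adj_mat n arc sigma) $$ (i, p i)) =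
      monom (sign p * (\<Prod>i\<in>M. c i)) (n - card M)"
    by (simp add: of_int_monom mult_monom)
  show ?thesis
  proof (cases "follows_arcs arc p")
    case True
    then have "(\<Prod>i\<in>M. c i) = (\<Prod>i\<in>M. - sigma i (p i))"
      by (intro prod.cong) (auto simp: c_def M_def follows_arcs_def)
    with True show ?thesis unfolding leibniz perm_weight_def M_def by simp
  next
    case False
    then obtain i where "p i \<noteq> i" "\<not> arc i (p i)" unfolding follows_arcs_def by blast
    then have "(\<Prod>i\<in>M. c i) = 0"
      using M finite_subset by (intro prod_zero) (auto simp: c_def M_def)
    with False show ?thesis unfolding leibniz by simp
  qed
qed

lemma char_poly_adj_mat:
  assumes "sidigraph n arc sigma"
  shows "char_poly (adj_mat n arc sigma) =
    (\<Sum>p | p permutes {0..<n} \<and> follows_arcs arc p. monom (perm_weight sigma p) (n - card {i. p i \<noteq> i}))"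
proof -
  have fin: "finite {p. p permutes {0..<n}}" by (rule finite_permutations) simp
  have "adj_mat n arc sigma \<in> carrier_mat n n" unfolding adj_mat_def by simp
  then have "char_poly (adj_mat n arc sigma) = (\<Sum>p | p permutes {0..<n}.
      signof p * (\<Prod>i = 0..<n. char_poly_matrix (adj_mat n arc sigma) $$ (i, p i)))"
    unfolding char_poly_def by (rule det_def'[OF char_poly_matrix_closed])
  also have "\<dots> = (\<Sum>p | p permutes {0..<n}.
      if follows_arcs arc p then monom (perm_weight sigma p) (n - card {i. p i \<noteq> i}) else 0)"
    using leibniz_term_adj_mat[OF assms] by (intro sum.cong) auto
  also have "\<dots> = (\<Sum>p | p permutes {0..<n} \<and> follows_arcs arc p.
      monom (perm_weight sigma p) (n - card {i. p i \<noteq> i}))"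
    by (subst sum.inter_filter[OF fin, symmetric]) simp
  finally show ?thesis .
qed

definition moved_graph :: "('a \<Rightarrow> 'a) \<Rightarrow> ('a \<times> 'a) set" where
  "moved_graph p = (\<lambda>i. (i, p i)) ` {i. p i \<noteq> i}"

definition graph_succ :: "(nat \<times> nat) set \<Rightarrow> nat \<Rightarrow> nat" where
  "graph_succ L v = (if v \<in> sd_verts L then THE w. (v, w) \<in> L else v)"

lemma mem_moved_graph [simp]: "(i, j) \<in> moved_graph p \<longleftrightarrow> p i \<noteq> i \<and> j = p i"
  by (auto simp: moved_graph_def)

lemma inj_moved_graph: "inj moved_graph"
proof (rule injI, rule ext)
  fix p q :: "'a \<Rightarrow> 'a" and i
  assume "moved_graph p = moved_graph q"
  then have "(i, j) \<in> moved_graph p \<longleftrightarrow> (i, j) \<in> moved_graph q" for j by simp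
  from this[of "p i"] this[of "q i"] show "p i = q i" by auto
qed

lemma sd_verts_moved_graph:
  assumes "inj p"
  shows "sd_verts (moved_graph p) = {i. p i \<noteq> i}"
proof -
  have "p i \<noteq> i \<Longrightarrow> p (p i) \<noteq> p i" for i using assms by (metis injD)
  then show ?thesis by (auto simp: sd_verts_def moved_graph_def image_image)
qed

lemma linear_subsidigraph_moved_graph:
  assumes p: "p permutes {0..<n}" and "follows_arcs arc p"
  shows "linear_subsidigraph n arc (moved_graph p)"
  unfolding linear_subsidigraph_def
proof (intro conjI ballI)
  show "moved_graph p \<subseteq> {(u, v). u < n \<and> v < n \<and> arc u v}"
    using assms permutes_not_in[OF p] permutes_in_image[OF p]
    by (fastforce simp: moved_graph_def follows_arcs_def)
  fix v assume "v \<in> sd_verts (moved_graph p)"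
  then have v: "p v \<noteq> v" using sd_verts_moved_graph[OF permutes_inj[OF p]] by simp
  then show "card {w. (v, w) \<in> moved_graph p} = 1" by simp
  obtain u where u: "p u = v" using permutes_surj[OF p] by (metis surjD)
  then have "{u'. (u', v) \<in> moved_graph p} = {u}"
    using v permutes_inj[OF p] by (auto dest: injD)
  then show "card {u. (u, v) \<in> moved_graph p} = 1" by simp
qed

lemma mem_sd_verts: "(u, v) \<in> L \<Longrightarrow> u \<in> sd_verts L \<and> v \<in> sd_verts L"
  by (force simp: sd_verts_def)

lemma graph_succ_eq_iff:
  assumes "linear_subsidigraph n arc L" and "v \<in> sd_verts L"
  shows "(v, w) \<in> L \<longleftrightarrow> w = graph_succ L v"
proof -
  obtain w0 where "{w. (v, w) \<in> L} = {w0}"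
    using assms unfolding linear_subsidigraph_def by (metis card_1_singletonE)
  then have "(v, w) \<in> L \<longleftrightarrow> w = w0" for w by blast
  then show ?thesis using assms(2) by (simp add: graph_succ_def)
qed

lemma linear_subsidigraph_pred_unique:
  assumes "linear_subsidigraph n arc L" and "(u, v) \<in> L" and "(u', v) \<in> L"
  shows "u = u'"
proof -
  have "card {u. (u, v) \<in> L} = 1"
    using assms mem_sd_verts unfolding linear_subsidigraph_def by blast
  then show ?thesis using assms(2,3) by (metis card_1_singletonE mem_Collect_eq singletonD)
qed

lemma graph_succ_permutes:
  assumes L: "linear_subsidigraph n arc L"
  shows "graph_succ L permutes {0..<n}"
proof -
  have V: "sd_verts L \<subseteq> {0..<n}" using L unfolding linear_subsidigraph_def sd_verts_def by force
  have succ: "v \<in> sd_verts L \<Longrightarrow> (v, graph_succ L v) \<in> L" for v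
    using graph_succ_eq_iff[OF L] by blast
  have inj: "inj_on (graph_succ L) (sd_verts L)"
    by (rule inj_onI) (metis succ linear_subsidigraph_pred_unique[OF L])
  have "graph_succ L ` sd_verts L \<subseteq> sd_verts L" using succ mem_sd_verts by blast
  then have "bij_betw (graph_succ L) (sd_verts L) (sd_verts L)"
    using inj endo_inj_surj[OF finite_subset[OF V finite_atLeastLessThan]]
    by (simp add: bij_betw_def)
  then have "graph_succ L permutes sd_verts L"
    by (rule bij_imp_permutes) (simp add: graph_succ_def)
  then show ?thesis using V by (rule permutes_subset)
qed

lemma graph_succ_moved_iff:
  assumes "\<And>u. \<not> arc u u" and L: "linear_subsidigraph n arc L"
  shows "graph_succ L v \<noteq> v \<longleftrightarrow> v \<in> sd_verts L"
proof
  assume v: "v \<in> sd_verts L"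
  then have "(v, graph_succ L v) \<in> L" using graph_succ_eq_iff[OF L] by blast
  then have "arc v (graph_succ L v)" using L unfolding linear_subsidigraph_def by blast
  then show "graph_succ L v \<noteq> v" using assms(1) by metis
qed (simp add: graph_succ_def split: if_splits)

lemma follows_arcs_graph_succ:
  assumes "\<And>u. \<not> arc u u" and L: "linear_subsidigraph n arc L"
  shows "follows_arcs arc (graph_succ L)"
  unfolding follows_arcs_def
proof (intro allI impI)
  fix v assume "graph_succ L v \<noteq> v"
  then have "(v, graph_succ L v) \<in> L"
    using graph_succ_moved_iff[OF assms] graph_succ_eq_iff[OF L] by blast
  then show "arc v (graph_succ L v)" using L unfolding linear_subsidigraph_def by blast
qed

lemma moved_graph_graph_succ:
  assumes "\<And>u. \<not> arc u u" and L: "linear_subsidigraph n arc L"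
  shows "moved_graph (graph_succ L) = L"
proof -
  have "(u, v) \<in> moved_graph (graph_succ L) \<longleftrightarrow> (u, v) \<in> L" for u v
    unfolding mem_moved_graph graph_succ_moved_iff[OF assms]
    using graph_succ_eq_iff[OF L] mem_sd_verts by blast
  then show ?thesis by auto
qed

lemma bij_betw_moved_graph:
  assumes "\<And>u. \<not> arc u u"
  shows "bij_betw moved_graph {p. p permutes {0..<n} \<and> follows_arcs arc p}
    {L. linear_subsidigraph n arc L}"
  unfolding bij_betw_def
proof
  show "inj_on moved_graph {p. p permutes {0..<n} \<and> follows_arcs arc p}"
    using inj_moved_graph by (rule inj_on_subset) simp
  show "moved_graph ` {p. p permutes {0..<n} \<and> follows_arcs arc p} = {L. linear_subsidigraph n arc L}"
  proof (intro equalityI subsetI)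
    fix L assume "L \<in> {L. linear_subsidigraph n arc L}"
    then have L: "linear_subsidigraph n arc L" by simp
    show "L \<in> moved_graph ` {p. p permutes {0..<n} \<and> follows_arcs arc p}"
      using moved_graph_graph_succ[OF assms L] graph_succ_permutes[OF L]
        follows_arcs_graph_succ[OF assms L] by (metis (mono_tags, lifting) image_eqI mem_Collect_eq)
  qed (auto intro: linear_subsidigraph_moved_graph)
qed

lemma sd_verts_subset:
  assumes "linear_subsidigraph n arc L"
  shows "sd_verts L \<subseteq> {0..<n}"
  using assms unfolding linear_subsidigraph_def sd_verts_def by force

lemma lin_count_0: "lin_count n arc 0 = 1"
proof -
  have "{L. linear_subsidigraph n arc L \<and> card (sd_verts L) = 0} = {{}}"
  proof (intro equalityI subsetI)
    fix L assume "L \<in> {L. linear_subsidigraph n arc L \<and> card (sd_verts L) = 0}"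
    then have L: "linear_subsidigraph n arc L" and c: "card (sd_verts L) = 0" by simp_all
    have "finite (sd_verts L)" using finite_subset[OF sd_verts_subset[OF L]] by blast
    with c have "sd_verts L = {}" by simp
    then show "L \<in> {{}}" by (auto simp: sd_verts_def)
  qed (simp add: linear_subsidigraph_def sd_verts_def)
  then show ?thesis unfolding lin_count_def by simp
qed

lemma sum_linear_subsidigraphs_by_order:
  fixes f :: "nat \<Rightarrow> 'a :: comm_semiring_1"
  assumes even: "\<And>L. linear_subsidigraph n arc L \<Longrightarrow> even (card (sd_verts L))"
  shows "(\<Sum>L | linear_subsidigraph n arc L. f (card (sd_verts L))) =
    (\<Sum>j = 0..n div 2. of_nat (lin_count n arc (2 * j)) * f (2 * j))"
proof -
  let ?LS = "{L. linear_subsidigraph n arc L}" and ?k = "\<lambda>L. card (sd_verts L)"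
  have "?LS \<subseteq> Pow ({0..<n} \<times> {0..<n})" by (auto simp: linear_subsidigraph_def)
  then have fin: "finite ?LS" by (rule finite_subset) simp
  have "?k L \<le> n" if "L \<in> ?LS" for L
    using card_mono[OF _ sd_verts_subset] that by fastforce
  then have bound: "(\<lambda>L. ?k L div 2) ` ?LS \<subseteq> {0..n div 2}"
    by (auto intro!: div_le_mono)
  have "(\<Sum>L\<in>?LS. f (?k L)) = (\<Sum>j = 0..n div 2. \<Sum>L | L \<in> ?LS \<and> ?k L div 2 = j. f (?k L))"
    by (rule sum.group[OF fin finite_atLeastAtMost bound, symmetric])
  also have "\<dots> = (\<Sum>j = 0..n div 2. of_nat (lin_count n arc (2 * j)) * f (2 * j))"
  proof (rule sum.cong[OF refl])
    fix j
    have "{L. L \<in> ?LS \<and> ?k L div 2 = j} = {L. linear_subsidigraph n arc L \<and> ?k L = 2 * j}"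
      using even by fastforce
    then show "(\<Sum>L | L \<in> ?LS \<and> ?k L div 2 = j. f (?k L)) = of_nat (lin_count n arc (2 * j)) * f (2 * j)"
      by (simp add: lin_count_def)
  qed
  finally show ?thesis .
qed

lemma Delta1_linear_subsidigraph_even:
  assumes D: "Delta1 n arc sigma" and L: "linear_subsidigraph n arc L"
  shows "even (card (sd_verts L))"
proof -
  have noloop: "\<And>u. \<not> arc u u" using D by (simp add: Delta1_def sidigraph_def)
  have "sd_verts L = {i. graph_succ L i \<noteq> i}" using graph_succ_moved_iff[OF noloop L] by blast
  then show ?thesis
    using Delta1_perm_weight(1)[OF D graph_succ_permutes[OF L] follows_arcs_graph_succ[OF noloop L]]
    by simp
qed

theorem theorem2p5:
  fixes n :: nat and arc :: "nat \<Rightarrow> nat \<Rightarrow> bool" and sigma :: "nat \<Rightarrow> nat \<Rightarrow> int"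
  assumes "Delta1 n arc sigma"
  shows "char_poly (adj_mat n arc sigma) =
           monom 1 n + (\<Sum>j = 1..n div 2. monom ((-1) ^ j * int (lin_count n arc (2 * j))) (n - 2 * j))"
proof -
  have S: "sidigraph n arc sigma" and noloop: "\<And>u. \<not> arc u u"
    using assms by (simp_all add: Delta1_def sidigraph_def)
  define lin_monom :: "nat \<Rightarrow> int poly" where "lin_monom k = monom ((-1) ^ (k div 2)) (n - k)" for k
  let ?P = "{p. p permutes {0..<n} \<and> follows_arcs arc p}"
  have "char_poly (adj_mat n arc sigma) = (\<Sum>p\<in>?P. lin_monom (card {i. p i \<noteq> i}))"
    unfolding char_poly_adj_mat[OF S] lin_monom_def
    using Delta1_perm_weight(2)[OF assms] by (intro sum.cong) auto
  also have "\<dots> = (\<Sum>p\<in>?P. lin_monom (card (sd_verts (moved_graph p))))"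
    by (intro sum.cong) (auto simp: sd_verts_moved_graph[OF permutes_inj])
  also have "\<dots> = (\<Sum>L | linear_subsidigraph n arc L. lin_monom (card (sd_verts L)))"
    by (rule sum.reindex_bij_betw[OF bij_betw_moved_graph[OF noloop]])
  also have "\<dots> = (\<Sum>j = 0..n div 2. of_nat (lin_count n arc (2 * j)) * lin_monom (2 * j))"
    using sum_linear_subsidigraphs_by_order Delta1_linear_subsidigraph_even[OF assms] by blast
  also have "\<dots> = (\<Sum>j = 0..n div 2. monom ((-1) ^ j * int (lin_count n arc (2 * j))) (n - 2 * j))"
    unfolding lin_monom_def by (simp add: of_nat_monom mult_monom mult.commute)
  also have "\<dots> = monom 1 n + (\<Sum>j = 1..n div 2. monom ((-1) ^ j * int (lin_count n arc (2 * j))) (n - 2 * j))"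
    by (simp add: sum.atLeast_Suc_atMost lin_count_0)
  finally show ?thesis .
qed

end
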